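(* Let $\Psi=(\psi_t)$ be a continuous expansive flow on a compact metric space $X$. Then every $\Psi\times\Psi$-invariant Borel probability measure $\nu$ on $X\times X$ is product expansive, i.e. there is $\epsilon>0$ with $\nu(NE^\times(\epsilon))=0$.
   Context: For $x\in X$ and $\epsilon>0$, $\Gamma_\epsilon(x)=\{y\in X: d(\psi_t x,\psi_t y)<\epsilon\ \forall t\in\mathbb R\}$; on $X\times X$ (with the max metric) and the product flow $\psi_t\times\psi_t$, $\Gamma_\epsilon(x,y)$ is defined analogously. $NE(\epsilon)=\{x: \Gamma_\epsilon(x)\not\subset\psi_{[-s,s]}(x)\ \text{for every } s>0\}$ and $NE^\times(\epsilon)=\{(x,y):\Gamma_\epsilon(x,y)\not\subset\psi_{[-s,s]}(x)\times\psi_{[-s,s]}(y)\ \text{for every } s>0\}$. The flow is expansive in the sense that $NE(\epsilon)=\emptyset$ for some $\epsilon>0$ (Bowen–Walters expansivity). *)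

theory Defs
  imports "HOL-Probability.Probability"
begin

definition is_flow :: "(real \<Rightarrow> 'a::metric_space \<Rightarrow> 'a) \<Rightarrow> bool" where
  "is_flow \<psi> \<longleftrightarrow> continuous_on UNIV (\<lambda>(t, x). \<psi> t x)
      \<and> (\<forall>x. \<psi> 0 x = x) \<and> (\<forall>s t x. \<psi> (s + t) x = \<psi> s (\<psi> t x))"

definition Gamma :: "(real \<Rightarrow> 'a::metric_space \<Rightarrow> 'a) \<Rightarrow> real \<Rightarrow> 'a \<Rightarrow> 'a set" where
  "Gamma \<psi> \<epsilon> x = {y. \<forall>t. dist (\<psi> t x) (\<psi> t y) < \<epsilon>}"

definition Gamma2 :: "(real \<Rightarrow> 'a::metric_space \<Rightarrow> 'a) \<Rightarrow> real \<Rightarrow> 'a \<Rightarrow> 'a \<Rightarrow> ('a \<times> 'a) set" where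
  "Gamma2 \<psi> \<epsilon> x y = {(x', y'). \<forall>t. max (dist (\<psi> t x) (\<psi> t x')) (dist (\<psi> t y) (\<psi> t y')) < \<epsilon>}"

definition orbit_seg :: "(real \<Rightarrow> 'a \<Rightarrow> 'a) \<Rightarrow> real \<Rightarrow> 'a \<Rightarrow> 'a set" where
  "orbit_seg \<psi> s x = (\<lambda>t. \<psi> t x) ` {-s..s}"

definition NE :: "(real \<Rightarrow> 'a::metric_space \<Rightarrow> 'a) \<Rightarrow> real \<Rightarrow> 'a set" where
  "NE \<psi> \<epsilon> = {x. \<forall>s>0. \<not> Gamma \<psi> \<epsilon> x \<subseteq> orbit_seg \<psi> s x}"

definition NE2 :: "(real \<Rightarrow> 'a::metric_space \<Rightarrow> 'a) \<Rightarrow> real \<Rightarrow> ('a \<times> 'a) set" where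
  "NE2 \<psi> \<epsilon> = {(x, y). \<forall>s>0. \<not> Gamma2 \<psi> \<epsilon> x y \<subseteq> orbit_seg \<psi> s x \<times> orbit_seg \<psi> s y}"

definition expansive_flow :: "(real \<Rightarrow> 'a::metric_space \<Rightarrow> 'a) \<Rightarrow> bool" where
  "expansive_flow \<psi> \<longleftrightarrow> (\<exists>\<epsilon>>0. NE \<psi> \<epsilon> = {})"

end

theory Submission
  imports Defs
begin

text \<open>Since the max metric gives \<open>Gamma2 \<psi> \<epsilon> x y = Gamma \<psi> \<epsilon> x \<times> Gamma \<psi> \<epsilon> y\<close>, a pair
  whose components are both expansive points is itself expansive for the product flow, so
  \<open>NE2 \<psi> \<epsilon> \<subseteq> NE \<psi> \<epsilon> \<times> UNIV \<union> UNIV \<times> NE \<psi> \<epsilon>\<close>. For an expansive flow \<open>NE \<psi> \<epsilon>\<close> is empty,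
  hence so is \<open>NE2 \<psi> \<epsilon>\<close>, and it is null for every measure.\<close>

lemma orbit_seg_mono: "s \<le> s' \<Longrightarrow> orbit_seg \<psi> s x \<subseteq> orbit_seg \<psi> s' x"
  unfolding orbit_seg_def by (rule image_mono) auto

lemma Gamma2_eq_Times: "Gamma2 \<psi> \<epsilon> x y = Gamma \<psi> \<epsilon> x \<times> Gamma \<psi> \<epsilon> y"
  unfolding Gamma2_def Gamma_def by auto

lemma NE2_subset_NE: "NE2 \<psi> \<epsilon> \<subseteq> NE \<psi> \<epsilon> \<times> UNIV \<union> UNIV \<times> NE \<psi> \<epsilon>"
proof
  fix p assume p: "p \<in> NE2 \<psi> \<epsilon>"
  obtain x y where [simp]: "p = (x, y)" by fastforce
  show "p \<in> NE \<psi> \<epsilon> \<times> UNIV \<union> UNIV \<times> NE \<psi> \<epsilon>"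
  proof (rule ccontr)
    assume "p \<notin> NE \<psi> \<epsilon> \<times> UNIV \<union> UNIV \<times> NE \<psi> \<epsilon>"
    then obtain s1 s2 where
      "s1 > 0" "Gamma \<psi> \<epsilon> x \<subseteq> orbit_seg \<psi> s1 x"
      "s2 > 0" "Gamma \<psi> \<epsilon> y \<subseteq> orbit_seg \<psi> s2 y"
      unfolding NE_def by auto
    moreover have "orbit_seg \<psi> s1 x \<subseteq> orbit_seg \<psi> (max s1 s2) x"
      and "orbit_seg \<psi> s2 y \<subseteq> orbit_seg \<psi> (max s1 s2) y"
      by (simp_all add: orbit_seg_mono)
    ultimately have "max s1 s2 > 0"
      and "Gamma2 \<psi> \<epsilon> x y \<subseteq> orbit_seg \<psi> (max s1 s2) x \<times> orbit_seg \<psi> (max s1 s2) y"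
      unfolding Gamma2_eq_Times by auto
    with p show False
      unfolding NE2_def by auto
  qed
qed

lemma NE2_empty_if_NE_empty: "NE \<psi> \<epsilon> = {} \<Longrightarrow> NE2 \<psi> \<epsilon> = {}"
  using NE2_subset_NE[of \<psi> \<epsilon>] by auto

theorem mainTheorem10:
  fixes \<psi> :: "real \<Rightarrow> 'a::metric_space \<Rightarrow> 'a"
    and \<nu> :: "('a \<times> 'a) measure"
  assumes "compact (UNIV :: 'a set)"
    and "is_flow \<psi>"
    and "expansive_flow \<psi>"
    and "prob_space \<nu>"
    and "sets \<nu> = sets borel"
    and "\<And>t. distr \<nu> \<nu> (\<lambda>(x, y). (\<psi> t x, \<psi> t y)) = \<nu>"
  shows "\<exists>\<epsilon>>0. \<exists>N\<in>sets \<nu>. NE2 \<psi> \<epsilon> \<subseteq> N \<and> emeasure \<nu> N = 0"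
proof -
  obtain \<epsilon> where "\<epsilon> > 0" "NE \<psi> \<epsilon> = {}"
    using \<open>expansive_flow \<psi>\<close> unfolding expansive_flow_def by blast
  then have "NE2 \<psi> \<epsilon> = {}"
    by (simp add: NE2_empty_if_NE_empty)
  with \<open>\<epsilon> > 0\<close> show ?thesis
    by (intro exI[of _ \<epsilon>] bexI[of _ "{}"]) auto
qed

end
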